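(* Let $c\in\mathbb{R}$. There is no function $U$ on $\mathbb{T}$ such that: $U$ is $C^1$ on $\mathbb{T}$ except at a single point $x_0\in\mathbb{T}$, where $U$ and $U'$ possess one-sided limits and $U$ is discontinuous (i.e. the one-sided limits of $U$ at $x_0$ differ); $U$ satisfies, for some constant $\gamma\in\mathbb{R}$, the profile equation $-cU+\tfrac{U^2}{2}+(1-\partial_x^2)^{-1}U=\gamma$ on $\mathbb{T}$; and $U$ satisfies the Rankine–Hugoniot condition $U(x_0-0)+U(x_0+0)=2c$. In other words, the Fornberg–Whitham equation $u_t+uu_x+(1-\partial_x^2)^{-1}u_x=0$ on $\mathbb{T}$ has no periodic traveling wave solution $u(x,t)=U(x-ct)$ with a single shock.
   Context: $\mathbb{T}=\mathbb{R}/\mathbb{Z}$, functions on $\mathbb{T}$ identified with $1$-periodic functions on $\mathbb{R}$. $(1-\partial_x^2)^{-1}U=K\ast U$, where $K$ is given on $[0,1]$ by $K(x)=\frac{\sqrt e}{e-1}\cosh(x-\tfrac12)$ and extended periodically; $U(x_0\mp0)$ denote the one-sided limits of $U$ at $x_0$ from the left and right. *)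

theory Defs
  imports "HOL-Analysis.Analysis"
begin

text \<open>Kernel of (1 - d^2/dx^2)^{-1} on the torus R/Z: given on [0,1] by
  sqrt e / (e - 1) * cosh (x - 1/2), extended 1-periodically.\<close>
definition FW_kernel :: "real \<Rightarrow> real" where
  "FW_kernel x = sqrt (exp 1) / (exp 1 - 1) * cosh (frac x - 1/2)"

definition FW_conv :: "(real \<Rightarrow> real) \<Rightarrow> real \<Rightarrow> real" where
  "FW_conv U x = integral {0..1} (\<lambda>y. FW_kernel (x - y) * U y)"

end

theory Submission
  imports Defs "HOL-Library.Periodic_Fun"
begin

text \<open>On a period \<open>(x\<^sub>0, x\<^sub>0 + 1)\<close> the function \<open>R = K * U\<close> solves \<open>R - R'' = U\<close>, and differentiating
  the profile equation gives \<open>(U - c) U' = - R'\<close>. Together these make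
  \<open>R'\<^sup>2/2 - R\<^sup>2/2 + c R - (U - c)\<^sup>3/3\<close> constant on the period. Since \<open>R\<close> and \<open>R'\<close> are continuous and
  periodic across the shock, the one-sided limits of \<open>U\<close> at \<open>x\<^sub>0\<close> satisfy
  \<open>(U(x\<^sub>0-0) - c)\<^sup>3 = (U(x\<^sub>0+0) - c)\<^sup>3\<close>, so \<open>U\<close> cannot jump.\<close>

lemma has_integral_periodic_unit:
  fixes f :: "real \<Rightarrow> 'a::banach"
  assumes per: "\<And>y. f (y + 1) = f y" and I: "(f has_integral I) {a..a+1}"
  shows "(f has_integral I) {0..1}"
proof -
  interpret periodic_fun_simple' f by standard (rule per)
  define n :: real where "n = of_int \<lfloor>a\<rfloor>"
  have n: "n \<le> a" "a \<le> n + 1" unfolding n_def by linarith+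
  have "((\<lambda>y. f (y + 1)) has_integral I) {a - 1..a + 1 - 1}"
    using has_integral_shift_real_ivl[OF I, of 1] by simp
  then have "(f has_integral I) {a - 1..a}"
    by (simp add: per)
  then have "(f has_integral I + I) {a - 1..a + 1}"
    using I by (intro has_integral_combine) auto
  then have int: "f integrable_on {n..a}" "f integrable_on {a..n + 1}"
    using n by (auto intro: integrable_subinterval_real[OF has_integral_integrable])
  have "(f has_integral integral {n..a} f) {n + 1..a + 1}"
    using has_integral_shift_real_ivl[OF integrable_integral[OF int(1)], of "-1"] by (simp add: minus_1)
  with int(2) have "(f has_integral integral {a..n + 1} f + integral {n..a} f) {a..a + 1}"
    by (intro has_integral_combine) (auto simp: n)
  with I have "(f has_integral I) {n..n + 1}"
    using has_integral_combine[OF n integrable_integral[OF int(1)] integrable_integral[OF int(2)]]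
    by (metis add.commute has_integral_unique)
  then have "((\<lambda>y. f (y + n)) has_integral I) {n - n..n + 1 - n}"
    by (rule has_integral_shift_real_ivl)
  then show ?thesis
    by (simp add: n_def plus_of_int)
qed

lemma tendsto_at_left_periodic:
  fixes U :: "real \<Rightarrow> 'a::topological_space"
  assumes per: "\<And>x. U (x + 1) = U x" and lim: "(U \<longlongrightarrow> L) (at_left a)"
  shows "(U \<longlongrightarrow> L) (at_left (a + 1))"
proof -
  have shift: "filtermap (\<lambda>x. x - d) (at_left b) = at_left (b - d)" for b d :: real
    by (simp add: filter_eq_iff eventually_filtermap eventually_at_filter filtermap_nhds_shift[symmetric])
  have "((\<lambda>x. U (x - 1)) \<longlongrightarrow> L) (at_left (a + 1))"
    using lim unfolding filterlim_def filtermap_filtermap[of U "\<lambda>x. x - 1", symmetric] shift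
    by simp
  moreover have "U (x - 1) = U x" for x
    using per[of "x - 1"] by simp
  ultimately show ?thesis
    by simp
qed

lemma FW_kernel_eq: "FW_kernel z = (exp (frac z) + exp (1 - frac z)) / (2 * (exp 1 - 1))"
proof -
  have "exp (1::real) = exp (1/2) * exp (1/2)"
    by (simp flip: exp_add)
  then have "sqrt (exp 1) = exp (1/2 :: real)"
    by (simp only: real_sqrt_mult_self) simp
  then show ?thesis
    unfolding FW_kernel_def cosh_def by (simp add: field_simps flip: exp_add)
qed

lemma FW_kernel_diff_one: "FW_kernel (z - 1) = FW_kernel z"
  by (simp add: FW_kernel_def frac_def)

lemma FW_kernel_pos:
  assumes "0 < z" "z < 1"
  shows "FW_kernel z = (exp z + exp 1 * exp (-z)) / (2 * (exp 1 - 1))"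
proof -
  have "frac z = z"
    using assms by (simp add: frac_eq)
  then show ?thesis
    by (simp add: FW_kernel_eq flip: exp_add)
qed

lemma FW_kernel_neg:
  assumes "-1 < z" "z < 0"
  shows "FW_kernel z = (exp 1 * exp z + exp (-z)) / (2 * (exp 1 - 1))"
proof -
  have "frac z = z + 1"
    using assms by (simp add: frac_unique_iff)
  then show ?thesis
    by (simp add: FW_kernel_eq exp_add mult.commute)
qed

lemma continuous_on_Icc_extend_by_limits:
  fixes U :: "real \<Rightarrow> 'a::topological_space"
  assumes "a < b" and cont: "\<And>x. x \<in> {a<..<b} \<Longrightarrow> isCont U x"
    and right: "(U \<longlongrightarrow> l) (at_right a)" and left: "(U \<longlongrightarrow> r) (at_left b)"
  shows "continuous_on {a..b} (\<lambda>x. if x \<le> a then l else if b \<le> x then r else U x)"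
    (is "continuous_on _ ?u")
proof (rule continuous_on_IccI)
  have eq: "\<forall>\<^sub>F x in F. U x = ?u x" if "\<forall>\<^sub>F x in F. x \<in> {a<..<b}" for F
    using that by eventually_elim auto
  show "(?u \<longlongrightarrow> ?u a) (at_right a)"
    using right tendsto_cong[OF eq[OF eventually_at_right_real]] \<open>a < b\<close> by simp
  show "(?u \<longlongrightarrow> ?u b) (at_left b)"
    using left tendsto_cong[OF eq[OF eventually_at_left_real]] \<open>a < b\<close> by simp
  show "(?u \<longlongrightarrow> ?u x) (at x)" if "a < x" "x < b" for x
  proof -
    have "\<forall>\<^sub>F y in at x. y \<in> {a<..<b}"
      using that by (intro eventually_at_in_open') auto
    with cont[of x] that show ?thesis
      by (simp add: isCont_def tendsto_cong[OF eq])
  qed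
qed (use \<open>a < b\<close> in simp)

lemma profile_ode_first_integral:
  fixes u R S :: "real \<Rightarrow> real"
  assumes "a < b"
    and cont: "continuous_on {a..b} u" "continuous_on {a..b} R" "continuous_on {a..b} S"
    and du: "\<And>x. x \<in> {a<..<b} \<Longrightarrow> (u has_real_derivative u' x) (at x)"
    and dR: "\<And>x. x \<in> {a<..<b} \<Longrightarrow> (R has_real_derivative S x) (at x)"
    and dS: "\<And>x. x \<in> {a<..<b} \<Longrightarrow> (S has_real_derivative R x - u x) (at x)"
    and profile: "\<And>x. x \<in> {a<..<b} \<Longrightarrow> - c * u x + (u x)\<^sup>2 / 2 + R x = \<gamma>"
  shows "(S b)\<^sup>2 / 2 - (R b)\<^sup>2 / 2 + c * R b - (u b - c) ^ 3 / 3
       = (S a)\<^sup>2 / 2 - (R a)\<^sup>2 / 2 + c * R a - (u a - c) ^ 3 / 3"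
proof -
  define G where "G x = (S x)\<^sup>2 / 2 - (R x)\<^sup>2 / 2 + c * R x - (u x - c) ^ 3 / 3" for x
  have slope: "(u x - c) * u' x = - S x" if x: "x \<in> {a<..<b}" for x
  proof -
    have "((\<lambda>y. - c * u y + (u y)\<^sup>2 / 2 + R y) has_real_derivative - c * u' x + u x * u' x + S x) (at x)"
      by (rule derivative_eq_intros du[OF x] dR[OF x] refl | simp)+
    then have "((\<lambda>y. \<gamma>) has_real_derivative - c * u' x + u x * u' x + S x) (at x)"
      by (rule has_field_derivative_transform_within_open[where S="{a<..<b}"]) (use x profile in auto)
    then have "- c * u' x + u x * u' x + S x = 0"
      by (rule DERIV_unique) (rule DERIV_const)
    then show ?thesis
      by (simp add: algebra_simps)
  qed
  have "G b = G a"
  proof (rule DERIV_isconst_end[OF \<open>a < b\<close>])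
    show "continuous_on {a..b} G"
      unfolding G_def by (intro continuous_intros cont) auto
    fix x assume "a < x" "x < b"
    then have x: "x \<in> {a<..<b}" by simp
    have "(G has_real_derivative
        S x * (R x - u x) - R x * S x + c * S x - (u x - c) * ((u x - c) * u' x)) (at x)"
      unfolding G_def
      by (rule derivative_eq_intros du[OF x] dR[OF x] dS[OF x] refl | simp add: power2_eq_square)+
    moreover have "S x * (R x - u x) - R x * S x + c * S x - (u x - c) * ((u x - c) * u' x) = 0"
      unfolding slope[OF x] by (simp add: algebra_simps)
    ultimately show "(G has_real_derivative 0) (at x)"
      by simp
  qed
  then show ?thesis
    by (simp add: G_def)
qed

locale FW_period =
  fixes u :: "real \<Rightarrow> real" and a :: real
  assumes continuous: "continuous_on {a..a+1} u"
begin

definition moment :: "real \<Rightarrow> real \<Rightarrow> real" where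
  "moment s x = integral {a..x} (\<lambda>y. exp (s * y) * u y)"

definition coeff_plus :: "real \<Rightarrow> real" where
  "coeff_plus x = (exp 1 / (exp 1 - 1) * moment (-1) (a + 1) - moment (-1) x) / 2"

definition coeff_minus :: "real \<Rightarrow> real" where
  "coeff_minus x = (moment 1 (a + 1) / (exp 1 - 1) + moment 1 x) / 2"

text \<open>\<^term>\<open>conv\<close> is \<open>(1 - \<partial>\<^sub>x\<^sup>2)\<^sup>-\<^sup>1 u\<close> on one period, in variation-of-constants form:
  the coefficients of \<open>e\<^sup>x\<close> and \<open>e\<^sup>-\<^sup>x\<close> vary so that \<open>conv'' = conv - u\<close>, and their initial
  values are chosen so that \<open>conv\<close> and \<open>conv'\<close> take equal values at both ends of the period.\<close>

definition conv :: "real \<Rightarrow> real" where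
  "conv x = exp x * coeff_plus x + exp (-x) * coeff_minus x"

definition conv' :: "real \<Rightarrow> real" where
  "conv' x = exp x * coeff_plus x - exp (-x) * coeff_minus x"

lemma continuous_on_weighted: "continuous_on {a..a+1} (\<lambda>y. exp (s * y) * u y)"
  by (intro continuous_intros continuous)

lemma moment_has_integral:
  assumes "a \<le> x" "x \<le> x'" "x' \<le> a + 1"
  shows "((\<lambda>y. exp (s * y) * u y) has_integral moment s x' - moment s x) {x..x'}"
proof -
  have int: "(\<lambda>y. exp (s * y) * u y) integrable_on {a..x'}"
    using assms by (intro integrable_continuous_real continuous_on_subset[OF continuous_on_weighted]) auto
  then have "(\<lambda>y. exp (s * y) * u y) integrable_on {x..x'}"
    by (rule integrable_subinterval_real) (use assms in auto)
  moreover have "moment s x' = moment s x + integral {x..x'} (\<lambda>y. exp (s * y) * u y)"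
    unfolding moment_def using Henstock_Kurzweil_Integration.integral_combine[OF assms(1,2) int] ..
  ultimately show ?thesis
    by (simp add: has_integral_integral)
qed

lemma moment_deriv:
  assumes "x \<in> {a<..<a+1}"
  shows "(moment s has_real_derivative exp (s * x) * u x) (at x)"
  using integral_has_real_derivative[OF continuous_on_weighted, of x s] assms
    at_within_Icc_at[of a x "a + 1"]
  unfolding moment_def by simp

lemma continuous_on_moment: "continuous_on {a..a+1} (moment s)"
  unfolding moment_def
  by (intro indefinite_integral_continuous_1 integrable_continuous_real continuous_on_weighted)

lemma coeff_plus_deriv:
  assumes "x \<in> {a<..<a+1}"
  shows "(coeff_plus has_real_derivative - exp (-x) * u x / 2) (at x)"
  unfolding coeff_plus_def by (auto intro!: derivative_eq_intros moment_deriv[OF assms])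

lemma coeff_minus_deriv:
  assumes "x \<in> {a<..<a+1}"
  shows "(coeff_minus has_real_derivative exp x * u x / 2) (at x)"
  unfolding coeff_minus_def by (auto intro!: derivative_eq_intros moment_deriv[OF assms])

lemma conv_deriv:
  assumes "x \<in> {a<..<a+1}"
  shows "(conv has_real_derivative conv' x) (at x)"
proof -
  have "(conv has_real_derivative exp x * coeff_plus x + exp x * (- exp (-x) * u x / 2)
      - exp (-x) * coeff_minus x + exp (-x) * (exp x * u x / 2)) (at x)"
    unfolding conv_def
    by (rule derivative_eq_intros coeff_plus_deriv[OF assms] coeff_minus_deriv[OF assms] refl | simp)+
  then show ?thesis
    by (rule DERIV_cong) (simp add: conv'_def exp_minus field_simps)
qed

lemma conv'_deriv:
  assumes "x \<in> {a<..<a+1}"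
  shows "(conv' has_real_derivative conv x - u x) (at x)"
proof -
  have "(conv' has_real_derivative exp x * coeff_plus x + exp x * (- exp (-x) * u x / 2)
      + exp (-x) * coeff_minus x - exp (-x) * (exp x * u x / 2)) (at x)"
    unfolding conv'_def
    by (rule derivative_eq_intros coeff_plus_deriv[OF assms] coeff_minus_deriv[OF assms] refl | simp)+
  then show ?thesis
    by (rule DERIV_cong) (simp add: conv_def exp_minus field_simps)
qed

lemma continuous_on_conv: "continuous_on {a..a+1} conv"
  unfolding conv_def coeff_plus_def coeff_minus_def
  by (intro continuous_intros continuous_on_moment) auto

lemma continuous_on_conv': "continuous_on {a..a+1} conv'"
  unfolding conv'_def coeff_plus_def coeff_minus_def
  by (intro continuous_intros continuous_on_moment) auto

lemma exp_coeff_periodic: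
  "exp (a + 1) * coeff_plus (a + 1) = exp a * coeff_plus a"
  "exp (-(a + 1)) * coeff_minus (a + 1) = exp (-a) * coeff_minus a"
  by (simp_all add: coeff_plus_def coeff_minus_def moment_def exp_add exp_diff exp_minus field_simps)

lemma conv_periodic: "conv (a + 1) = conv a" "conv' (a + 1) = conv' a"
  unfolding conv_def conv'_def exp_coeff_periodic by simp_all

lemma moment_start [simp]: "moment s a = 0"
  by (simp add: moment_def)

lemma kernel_has_integral_below:
  assumes x: "x \<in> {a<..<a+1}"
  shows "((\<lambda>y. FW_kernel (x - y) * u y) has_integral
      (exp x * moment (-1) x + exp 1 * exp (-x) * moment 1 x) / (2 * (exp 1 - 1))) {a..x}"
proof (rule has_integral_spike_finite[where S="{a, x}"])
  show "((\<lambda>y. (exp x * (exp (-1 * y) * u y) + exp 1 * exp (-x) * (exp (1 * y) * u y)) / (2 * (exp 1 - 1)))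
      has_integral (exp x * moment (-1) x + exp 1 * exp (-x) * moment 1 x) / (2 * (exp 1 - 1))) {a..x}"
    using x by (intro has_integral_divide has_integral_add has_integral_mult_right
        moment_has_integral[where x=a, simplified]) auto
  fix y assume "y \<in> {a..x} - {a, x}"
  with x show "FW_kernel (x - y) * u y
      = (exp x * (exp (-1 * y) * u y) + exp 1 * exp (-x) * (exp (1 * y) * u y)) / (2 * (exp 1 - 1))"
    by (simp add: FW_kernel_pos exp_diff exp_minus field_simps)
qed simp

lemma kernel_has_integral_above:
  assumes x: "x \<in> {a<..<a+1}"
  shows "((\<lambda>y. FW_kernel (x - y) * u y) has_integral
      (exp 1 * exp x * (moment (-1) (a + 1) - moment (-1) x) + exp (-x) * (moment 1 (a + 1) - moment 1 x))
        / (2 * (exp 1 - 1))) {x..a+1}"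
proof (rule has_integral_spike_finite[where S="{x, a + 1}"])
  show "((\<lambda>y. (exp 1 * exp x * (exp (-1 * y) * u y) + exp (-x) * (exp (1 * y) * u y)) / (2 * (exp 1 - 1)))
      has_integral (exp 1 * exp x * (moment (-1) (a + 1) - moment (-1) x)
        + exp (-x) * (moment 1 (a + 1) - moment 1 x)) / (2 * (exp 1 - 1))) {x..a+1}"
    using x by (intro has_integral_divide has_integral_add has_integral_mult_right moment_has_integral) auto
  fix y assume "y \<in> {x..a+1} - {x, a + 1}"
  with x show "FW_kernel (x - y) * u y
      = (exp 1 * exp x * (exp (-1 * y) * u y) + exp (-x) * (exp (1 * y) * u y)) / (2 * (exp 1 - 1))"
    by (simp add: FW_kernel_neg exp_diff exp_minus field_simps)
qed simp

lemma kernel_has_integral_conv: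
  assumes x: "x \<in> {a<..<a+1}"
  shows "((\<lambda>y. FW_kernel (x - y) * u y) has_integral conv x) {a..a+1}"
proof -
  have "(exp x * moment (-1) x + exp 1 * exp (-x) * moment 1 x) / (2 * (exp 1 - 1))
      + (exp 1 * exp x * (moment (-1) (a + 1) - moment (-1) x) + exp (-x) * (moment 1 (a + 1) - moment 1 x))
        / (2 * (exp 1 - 1)) = conv x"
    by (simp add: conv_def coeff_plus_def coeff_minus_def field_simps)
  with has_integral_combine[OF _ _ kernel_has_integral_below[OF x] kernel_has_integral_above[OF x]] x
  show ?thesis
    by simp
qed

lemma FW_conv_eq_conv:
  assumes per: "\<And>y. U (y + 1) = U y" and agree: "\<And>y. y \<in> {a<..<a+1} \<Longrightarrow> U y = u y"
    and x: "x \<in> {a<..<a+1}"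
  shows "FW_conv U x = conv x"
proof -
  define f where "f y = FW_kernel (x - y) * U y" for y
  have "(f has_integral conv x) {a..a+1}"
  proof (rule has_integral_spike_finite[OF _ _ kernel_has_integral_conv[OF x]])
    show "f y = FW_kernel (x - y) * u y" if "y \<in> {a..a+1} - {a, a + 1}" for y
      using that by (simp add: f_def agree)
  qed simp
  moreover have "f (y + 1) = f y" for y
    using FW_kernel_diff_one[of "x - y"] by (simp add: f_def per diff_diff_eq)
  ultimately have "(f has_integral conv x) {0..1}"
    by (intro has_integral_periodic_unit)
  then show ?thesis
    unfolding FW_conv_def f_def[symmetric] by (rule integral_unique)
qed

end

lemma FW_profile_one_sided_limits_eq:
  fixes U :: "real \<Rightarrow> real"
  assumes per: "\<And>x. U (x + 1) = U x"
    and diff: "\<And>x. x \<in> {a<..<a+1} \<Longrightarrow> U differentiable (at x)"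
    and right: "(U \<longlongrightarrow> uR) (at_right a)" and left: "(U \<longlongrightarrow> uL) (at_left (a + 1))"
    and profile: "\<And>x. x \<in> {a<..<a+1} \<Longrightarrow> - c * U x + (U x)\<^sup>2 / 2 + FW_conv U x = \<gamma>"
  shows "uL = uR"
proof -
  define u where "u x = (if x \<le> a then uR else if a + 1 \<le> x then uL else U x)" for x
  have agree: "U x = u x" if "x \<in> {a<..<a+1}" for x
    using that by (simp add: u_def)
  have "continuous_on {a..a+1} u"
    unfolding u_def
    by (intro continuous_on_Icc_extend_by_limits right left differentiable_imp_continuous_within diff) auto
  then interpret FW_period u a
    by (rule FW_period.intro)
  have du: "(u has_real_derivative deriv U x) (at x)" if x: "x \<in> {a<..<a+1}" for x
  proof (rule has_field_derivative_transform_within_open[where S="{a<..<a+1}"])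
    show "(U has_real_derivative deriv U x) (at x)"
      using diff[OF x] by (simp add: DERIV_deriv_iff_real_differentiable)
  qed (use x agree in auto)
  have profile_u: "- c * u x + (u x)\<^sup>2 / 2 + conv x = \<gamma>" if "x \<in> {a<..<a+1}" for x
    using profile[OF that] agree[OF that] FW_conv_eq_conv[OF per agree that] by simp
  have "(conv' (a + 1))\<^sup>2 / 2 - (conv (a + 1))\<^sup>2 / 2 + c * conv (a + 1) - (u (a + 1) - c) ^ 3 / 3
      = (conv' a)\<^sup>2 / 2 - (conv a)\<^sup>2 / 2 + c * conv a - (u a - c) ^ 3 / 3"
    by (rule profile_ode_first_integral[OF _ continuous continuous_on_conv continuous_on_conv'
          du conv_deriv conv'_deriv profile_u]) simp
  then have "(uL - c) ^ 3 = (uR - c) ^ 3"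
    by (simp add: conv_periodic u_def)
  then have "root 3 ((uL - c) ^ 3) = root 3 ((uR - c) ^ 3)"
    by simp
  then show ?thesis
    by (simp add: odd_real_root_power_cancel)
qed

theorem mainTheorem4:
  fixes c :: real
  shows "\<not> (\<exists>(U :: real \<Rightarrow> real) (x0 :: real) (\<gamma> :: real).
      (\<forall>x. U (x + 1) = U x)
    \<and> (\<forall>x. (\<forall>k::int. x \<noteq> x0 + of_int k) \<longrightarrow> U differentiable (at x))
    \<and> continuous_on {x. \<forall>k::int. x \<noteq> x0 + of_int k} (deriv U)
    \<and> (\<exists>uL uR. (U \<longlongrightarrow> uL) (at_left x0) \<and> (U \<longlongrightarrow> uR) (at_right x0)
              \<and> uL \<noteq> uR \<and> uL + uR = 2 * c)
    \<and> (\<exists>dL dR. (deriv U \<longlongrightarrow> dL) (at_left x0) \<and> (deriv U \<longlongrightarrow> dR) (at_right x0))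
    \<and> (\<forall>x. (\<forall>k::int. x \<noteq> x0 + of_int k) \<longrightarrow>
           - c * U x + (U x)\<^sup>2 / 2 + FW_conv U x = \<gamma>))"
proof -
  have "uL = uR"
    if per: "\<forall>x. U (x + 1) = U x"
      and diff: "\<forall>x. (\<forall>k::int. x \<noteq> a + of_int k) \<longrightarrow> U differentiable (at x)"
      and left: "(U \<longlongrightarrow> uL) (at_left a)" and right: "(U \<longlongrightarrow> uR) (at_right a)"
      and profile: "\<forall>x. (\<forall>k::int. x \<noteq> a + of_int k) \<longrightarrow> - c * U x + (U x)\<^sup>2 / 2 + FW_conv U x = \<gamma>"
    for U :: "real \<Rightarrow> real" and a uL uR \<gamma>
  proof (rule FW_profile_one_sided_limits_eq)
    have off_lattice: "\<forall>k::int. x \<noteq> a + of_int k" if "x \<in> {a<..<a+1}" for x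
    proof
      fix k :: int
      show "x \<noteq> a + of_int k"
        using that by (cases "k \<le> 0") (auto dest: of_int_le_0_iff[THEN iffD2] simp: not_le)
    qed
    show "U differentiable (at x)" "- c * U x + (U x)\<^sup>2 / 2 + FW_conv U x = \<gamma>"
      if "x \<in> {a<..<a+1}" for x
      using off_lattice[OF that] diff profile by blast+
    show "(U \<longlongrightarrow> uL) (at_left (a + 1))"
      using per left by (intro tendsto_at_left_periodic) auto
  qed (use per right in auto)
  then show ?thesis
    by blast
qed

end
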